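(* Let $\mathcal{L}(W;g)$ be a real-valued function of parameters $W=\{w^{(1)},\dots,w^{(m)}\}$ (vectors) and $g$, which is twice continuously differentiable at every point with all $w^{(j)}\neq0$, and such that each $w^{(j)}$ is scale-invariant: $\mathcal{L}(\dots,c\,w^{(j)},\dots)=\mathcal{L}(\dots,w^{(j)},\dots)$ for all $c>0$. Fix $i$ and suppose that for every $(V;g)$ with all $\|v^{(j)}\|_2=1$, the Hessian of $\mathcal{L}$ with respect to the block $w^{(i)}$ at $(V;g)$ has spectral norm at most $L^{\mathrm{vv}}_{ii}$. Then for any $W$ (with all $w^{(j)}\neq0$) and $g$, $$\left\|\nabla_{w^{(i)}}\mathcal{L}(W;g)\right\|_2\le\frac{\pi L^{\mathrm{vv}}_{ii}}{\|w^{(i)}\|_2}.$$ *)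

theory Defs
  imports "HOL-Analysis.Analysis"
begin

text \<open>The full parameter vector (all blocks w^(1..m) and g) is a point x of a
Euclidean space. Block j consists of the coordinates in the set of basis
vectors B j; blk (B j) x is the orthogonal projection of x onto that block,
i.e. the block vector w^(j) embedded in the full space.\<close>

definition blk :: "'a::euclidean_space set \<Rightarrow> 'a \<Rightarrow> 'a" where
  "blk B x = (\<Sum>b\<in>B. (x \<bullet> b) *\<^sub>R b)"

end

theory Submission
  imports Defs
begin

(* Differentiating L along the ray c \<mapsto> c w_i at c = 1 shows that the block gradient G is
   orthogonal to w_i, and the chain rule through the blockwise rescaling shows that G scales
   like 1/||w_i||; so it suffices to prove ||G|| \<le> pi Lvv when every block is a unit vector.
   There, move block i along the great circle through w_i in the direction of G. L is
   2 pi-periodic along it, so its derivative d vanishes at some |z| < pi, while d(0) = ||G||.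
   By orthogonality the curvature term of d' vanishes, so |d'| \<le> Lvv, and the mean value
   theorem gives ||G|| = |d(0) - d(z)| \<le> pi Lvv. *)

lemma blk_inner_Basis:
  assumes "B \<subseteq> Basis" "b \<in> Basis"
  shows "blk B x \<bullet> b = (if b \<in> B then x \<bullet> b else 0)"
proof -
  have "blk B x \<bullet> b = (\<Sum>c\<in>B. (x \<bullet> c) * (c \<bullet> b))"
    unfolding blk_def by (simp add: inner_sum_left)
  also have "\<dots> = (\<Sum>c\<in>B. if c = b then x \<bullet> c else 0)"
    using assms by (intro sum.cong) (auto simp: inner_Basis)
  also have "\<dots> = (if b \<in> B then x \<bullet> b else 0)"
    using finite_subset[OF assms(1)] by (simp add: sum.delta')
  finally show ?thesis .
qed

lemma linear_blk: "linear (blk B)"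
  unfolding blk_def
  by (rule linearI) (simp_all add: inner_add_left scaleR_add_left sum.distrib scaleR_sum_right)

lemma bounded_linear_blk: "bounded_linear (blk (B :: 'a::euclidean_space set))"
  using linear_blk linear_conv_bounded_linear by blast

lemma blk_blk:
  assumes "B \<subseteq> Basis" "C \<subseteq> Basis"
  shows "blk B (blk C x) = blk (B \<inter> C) x"
proof (rule euclidean_eqI)
  fix b :: 'a
  assume "b \<in> Basis"
  moreover have "B \<inter> C \<subseteq> Basis"
    using assms by blast
  ultimately show "blk B (blk C x) \<bullet> b = blk (B \<inter> C) x \<bullet> b"
    using assms by (simp add: blk_inner_Basis)
qed

lemma blk_idem: "B \<subseteq> Basis \<Longrightarrow> blk B (blk B x) = blk B x"
  by (simp add: blk_blk)

lemma blk_empty [simp]: "blk {} x = 0"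
  by (simp add: blk_def)

lemma inner_blk_commute:
  assumes "B \<subseteq> Basis"
  shows "blk B a \<bullet> h = a \<bullet> blk B h"
  unfolding blk_def inner_sum_left inner_sum_right
  by (intro sum.cong refl) (simp add: inner_commute[of h] mult.commute)

lemma abs_inner_le_onorm_compression:
  assumes "B \<subseteq> Basis" "bounded_linear A" "blk B h = h" "norm h = 1"
  shows "\<bar>A h \<bullet> h\<bar> \<le> onorm (\<lambda>k. blk B (A (blk B k)))"
proof -
  have "bounded_linear (\<lambda>k. blk B (A (blk B k)))"
    by (intro bounded_linear_compose[OF bounded_linear_blk]
        bounded_linear_compose[OF assms(2) bounded_linear_blk])
  from onorm[OF this, of h] have "norm (blk B (A (blk B h))) \<le> onorm (\<lambda>k. blk B (A (blk B k)))"
    using assms(4) by simp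
  moreover have "A h \<bullet> h = blk B (A (blk B h)) \<bullet> h"
    using assms(1,3) by (simp add: inner_blk_commute)
  ultimately show ?thesis
    using Cauchy_Schwarz_ineq2[of "blk B (A (blk B h))" h] assms(4) by simp
qed

lemma norm_cos_sin_orthonormal:
  fixes u v :: "'a::real_inner"
  assumes "norm v = 1" "norm u = 1" "v \<bullet> u = 0"
  shows "norm (cos t *\<^sub>R v + sin t *\<^sub>R u) = 1"
  using assms unfolding norm_eq_1
  by (simp add: inner_add_left inner_add_right inner_commute[of u v] flip: power2_eq_square)

lemma gradient_orthogonal_if_scale_invariant:
  fixes f :: "'a::real_inner \<Rightarrow> real"
  assumes f_deriv: "(f has_derivative (\<lambda>h. g \<bullet> h)) (at y)"
    and invariant: "\<And>c. c > 0 \<Longrightarrow> f (y + (c - 1) *\<^sub>R w) = f y"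
  shows "g \<bullet> w = 0"
proof -
  let ?ray = "\<lambda>c::real. y + (c - 1) *\<^sub>R w"
  have "(?ray has_derivative (\<lambda>s. s *\<^sub>R w)) (at 1)"
    by (auto intro!: derivative_eq_intros)
  then have "((f \<circ> ?ray) has_derivative (\<lambda>h. g \<bullet> h) \<circ> (\<lambda>s. s *\<^sub>R w)) (at 1)"
    by (rule diff_chain_at) (simp add: f_deriv)
  moreover have "((f \<circ> ?ray) has_derivative (\<lambda>s. 0)) (at 1)"
    by (rule has_derivative_transform_within_open[OF has_derivative_const, of "{0<..}"])
       (use invariant in auto)
  ultimately have "(\<lambda>h. g \<bullet> h) \<circ> (\<lambda>s. s *\<^sub>R w) = (\<lambda>s. 0)"
    by (rule has_derivative_unique)
  from fun_cong[OF this, of 1] show ?thesis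
    by simp
qed

lemma gradient_eq_if_invariant_under_linear:
  fixes f :: "'a::real_inner \<Rightarrow> real"
  assumes S: "bounded_linear S" and U: "open U" "y \<in> U"
    and invariant: "\<And>z. z \<in> U \<Longrightarrow> f (S z) = f z"
    and deriv_S: "(f has_derivative (\<lambda>h. g \<bullet> h)) (at (S y))"
    and deriv: "(f has_derivative (\<lambda>h. g0 \<bullet> h)) (at y)"
  shows "g \<bullet> S h = g0 \<bullet> h"
proof -
  have "((f \<circ> S) has_derivative (\<lambda>h. g \<bullet> S h)) (at y)"
    using diff_chain_at[OF bounded_linear.has_derivative[OF S has_derivative_ident] deriv_S]
    by (simp add: o_def)
  moreover have "((f \<circ> S) has_derivative (\<lambda>h. g0 \<bullet> h)) (at y)"
    by (rule has_derivative_transform_within_open[OF deriv U]) (simp add: invariant)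
  ultimately show ?thesis
    using has_derivative_unique by metis
qed

lemma great_circle_gradient_bound:
  fixes f :: "'a::real_inner \<Rightarrow> real" and gr :: "'a \<Rightarrow> 'a" and H :: "'a \<Rightarrow> 'a \<Rightarrow> 'a"
    and p u v :: 'a
  defines "\<gamma> \<equiv> \<lambda>t. p + cos t *\<^sub>R v + sin t *\<^sub>R u"
    and "\<gamma>' \<equiv> \<lambda>t. cos t *\<^sub>R u - sin t *\<^sub>R v"
  assumes grad: "\<And>t. (f has_derivative (\<lambda>h. gr (\<gamma> t) \<bullet> h)) (at (\<gamma> t))"
    and hess: "\<And>t. (gr has_derivative H (\<gamma> t)) (at (\<gamma> t))"
    and radial: "\<And>t. gr (\<gamma> t) \<bullet> (\<gamma> t - p) = 0"
    and bound: "\<And>t. \<bar>H (\<gamma> t) (\<gamma>' t) \<bullet> \<gamma>' t\<bar> \<le> M"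
  shows "\<bar>gr (p + v) \<bullet> u\<bar> \<le> pi * M"
proof -
  define d where "d t = gr (\<gamma> t) \<bullet> \<gamma>' t" for t
  have \<gamma>_deriv: "(\<gamma> has_derivative (\<lambda>s. s *\<^sub>R \<gamma>' t)) (at t)" for t
    unfolding \<gamma>_def \<gamma>'_def by (auto intro!: derivative_eq_intros simp: algebra_simps)
  have \<gamma>'_deriv: "(\<gamma>' has_derivative (\<lambda>s. - s *\<^sub>R (\<gamma> t - p))) (at t)" for t
    unfolding \<gamma>_def \<gamma>'_def by (auto intro!: derivative_eq_intros simp: algebra_simps)
  have f_deriv: "((\<lambda>t. f (\<gamma> t)) has_real_derivative d t) (at t)" for t
    using diff_chain_at[OF \<gamma>_deriv grad, unfolded comp_def[of f \<gamma>]]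
    unfolding has_field_derivative_def
    by (rule has_derivative_eq_rhs) (auto simp: d_def o_def mult.commute)
  have d_deriv: "(d has_real_derivative H (\<gamma> t) (\<gamma>' t) \<bullet> \<gamma>' t) (at t)" for t
    \<comment> \<open>\<open>\<gamma>'' = -(\<gamma> - p)\<close>, so the curvature term vanishes by \<open>radial\<close>\<close>
  proof -
    have H_linear: "linear (H (\<gamma> t))"
      using has_derivative_linear[OF hess] .
    have "(d has_derivative
        (\<lambda>s. gr (\<gamma> t) \<bullet> (- s *\<^sub>R (\<gamma> t - p)) + H (\<gamma> t) (s *\<^sub>R \<gamma>' t) \<bullet> \<gamma>' t)) (at t)"
      unfolding d_def[abs_def]
      using has_derivative_inner[OF diff_chain_at[OF \<gamma>_deriv hess] \<gamma>'_deriv] by (simp add: o_def)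
    then show ?thesis
      unfolding has_field_derivative_def
      by (rule has_derivative_eq_rhs) (simp add: fun_eq_iff radial linear_scale[OF H_linear] mult.commute)
  qed
  obtain z where z: "-pi < z" "z < pi" "d z = 0"
    \<comment> \<open>Rolle, since \<open>f \<circ> \<gamma>\<close> is \<open>2 pi\<close>-periodic\<close>
  proof -
    have "\<gamma> (-pi) = \<gamma> pi"
      by (simp add: \<gamma>_def)
    moreover have "continuous_on {-pi..pi} (\<lambda>t. f (\<gamma> t))"
      using f_deriv by (intro continuous_at_imp_continuous_on ballI DERIV_isCont)
    ultimately obtain z where "-pi < z" "z < pi" "DERIV (\<lambda>t. f (\<gamma> t)) z :> 0"
      using Rolle[of "-pi" pi "\<lambda>t. f (\<gamma> t)"] f_deriv real_differentiable_def by force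
    then show thesis
      using that DERIV_unique[OF f_deriv] by blast
  qed
  have M_nonneg: "0 \<le> M"
    using bound[of 0] by (meson abs_ge_zero order_trans)
  have "\<bar>d 0\<bar> = \<bar>d 0 - d z\<bar>"
    using z by simp
  also have "\<dots> \<le> M * \<bar>0 - z\<bar>"
    using field_differentiable_bound[of UNIV d "\<lambda>t. H (\<gamma> t) (\<gamma>' t) \<bullet> \<gamma>' t" M 0 z]
      d_deriv bound by auto
  also have "\<dots> \<le> M * pi"
    using z M_nonneg by (intro mult_left_mono) auto
  finally show ?thesis
    by (simp add: d_def \<gamma>_def \<gamma>'_def mult.commute)
qed

locale parameter_blocks =
  fixes B :: "nat \<Rightarrow> 'a::euclidean_space set" and m :: nat
  assumes blocks_Basis: "j < m \<Longrightarrow> B j \<subseteq> Basis"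
    and blocks_disjoint: "j < m \<Longrightarrow> k < m \<Longrightarrow> j \<noteq> k \<Longrightarrow> B j \<inter> B k = {}"
begin

definition nondegenerate :: "'a set" where
  "nondegenerate = {x. \<forall>j<m. blk (B j) x \<noteq> 0}"

definition unit_blocks :: "'a set" where
  "unit_blocks = {x. \<forall>j<m. norm (blk (B j) x) = 1}"

(* Partial rescalings (k < m) are needed because invariance is only assumed one block at a time. *)
definition rescale :: "(nat \<Rightarrow> real) \<Rightarrow> nat \<Rightarrow> 'a \<Rightarrow> 'a" where
  "rescale c k y = y + (\<Sum>j<k. (c j - 1) *\<^sub>R blk (B j) y)"

lemma unit_blocks_subset_nondegenerate: "unit_blocks \<subseteq> nondegenerate"
  by (auto simp: unit_blocks_def nondegenerate_def)

lemma open_nondegenerate: "open nondegenerate"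
proof -
  have "nondegenerate = (\<Inter>j<m. {x. blk (B j) x \<noteq> 0})"
    by (auto simp: nondegenerate_def)
  moreover have "open {x. blk (B j) x \<noteq> 0}" for j
    by (intro open_Collect_neq linear_continuous_on bounded_linear_blk continuous_on_const)
  ultimately show ?thesis
    by auto
qed

lemma blk_blk_block:
  "j < m \<Longrightarrow> k < m \<Longrightarrow> blk (B j) (blk (B k) y) = (if j = k then blk (B k) y else 0)"
  using blocks_Basis blocks_disjoint by (auto simp: blk_blk)

lemma blk_rescale:
  assumes "l < m" "k \<le> m"
  shows "blk (B l) (rescale c k y) = (if l < k then c l else 1) *\<^sub>R blk (B l) y"
proof -
  have "blk (B l) (rescale c k y) = blk (B l) y + (\<Sum>j<k. (c j - 1) *\<^sub>R blk (B l) (blk (B j) y))"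
    unfolding rescale_def by (simp add: linear_add linear_sum linear_scale linear_blk)
  also have "\<dots> = blk (B l) y + (\<Sum>j<k. if l = j then (c j - 1) *\<^sub>R blk (B l) y else 0)"
    using assms by (intro arg_cong2[where f="(+)"] refl sum.cong) (auto simp: blk_blk_block)
  also have "\<dots> = (if l < k then c l else 1) *\<^sub>R blk (B l) y"
    by (simp add: algebra_simps)
  finally show ?thesis .
qed

lemma rescale_Suc:
  "k < m \<Longrightarrow> rescale c (Suc k) y = rescale c k y + (c k - 1) *\<^sub>R blk (B k) (rescale c k y)"
  using blk_rescale[of k k c y] by (simp add: rescale_def)

lemma bounded_linear_rescale: "bounded_linear (rescale c k)"
  unfolding rescale_def[abs_def]
  by (intro bounded_linear_add bounded_linear_ident bounded_linear_sum
      bounded_linear_compose[OF bounded_linear_scaleR_right bounded_linear_blk])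

lemma inner_rescale_commute:
  assumes "k \<le> m"
  shows "rescale c k a \<bullet> h = a \<bullet> rescale c k h"
  unfolding rescale_def inner_add_left inner_add_right inner_sum_left inner_sum_right
  using assms by (intro arg_cong2[where f="(+)"] sum.cong) (auto simp: inner_blk_commute blocks_Basis)

lemma rescale_nondegenerate:
  assumes "\<And>j. j < m \<Longrightarrow> c j > 0" "k \<le> m" "y \<in> nondegenerate"
  shows "rescale c k y \<in> nondegenerate"
  unfolding nondegenerate_def
proof (intro CollectI allI impI)
  fix j
  assume "j < m"
  with assms show "blk (B j) (rescale c k y) \<noteq> 0"
    by (simp add: blk_rescale nondegenerate_def less_imp_neq[symmetric])
qed

lemma rescale_invariant:
  assumes invariant: "\<And>j x s. j < m \<Longrightarrow> x \<in> nondegenerate \<Longrightarrow> s > 0 \<Longrightarrow>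
      f (x + (s - 1) *\<^sub>R blk (B j) x) = f x"
    and c: "\<And>j. j < m \<Longrightarrow> c j > 0" and y: "y \<in> nondegenerate"
  shows "k \<le> m \<Longrightarrow> f (rescale c k y) = f y"
proof (induction k)
  case 0
  then show ?case
    by (simp add: rescale_def)
next
  case (Suc k)
  then have "f (rescale c (Suc k) y) = f (rescale c k y)"
    using invariant c rescale_nondegenerate[OF c _ y] by (simp add: rescale_Suc)
  with Suc show ?case
    by simp
qed

lemma blk_gradient_rescale:
  fixes f :: "'a \<Rightarrow> real"
  assumes invariant: "\<And>j x s. j < m \<Longrightarrow> x \<in> nondegenerate \<Longrightarrow> s > 0 \<Longrightarrow>
      f (x + (s - 1) *\<^sub>R blk (B j) x) = f x"
    and grad: "\<And>x. x \<in> nondegenerate \<Longrightarrow> (f has_derivative (\<lambda>h. gr x \<bullet> h)) (at x)"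
    and c: "\<And>j. j < m \<Longrightarrow> c j > 0" and y: "y \<in> nondegenerate" and i: "i < m"
  shows "blk (B i) (gr y) = c i *\<^sub>R blk (B i) (gr (rescale c m y))"
proof -
  have "gr (rescale c m y) \<bullet> rescale c m h = gr y \<bullet> h" for h
  proof (rule gradient_eq_if_invariant_under_linear[OF bounded_linear_rescale open_nondegenerate y])
    show "f (rescale c m z) = f z" if "z \<in> nondegenerate" for z
      using rescale_invariant[where f = f and c = c, OF invariant c that order.refl] .
    show "(f has_derivative (\<lambda>h. gr (rescale c m y) \<bullet> h)) (at (rescale c m y))"
      by (rule grad[OF rescale_nondegenerate[OF c order.refl y]])
  qed (rule grad[OF y])
  then have "rescale c m (gr (rescale c m y)) \<bullet> h = gr y \<bullet> h" for h
    by (simp add: inner_rescale_commute)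
  then have "rescale c m (gr (rescale c m y)) = gr y"
    by (metis vector_eq_rdot)
  moreover have "blk (B i) (rescale c m a) = c i *\<^sub>R blk (B i) a" for a
    using blk_rescale[OF i order.refl] i by simp
  ultimately show ?thesis
    by metis
qed

lemma replace_block_unit_blocks:
  assumes V: "V \<in> unit_blocks" and i: "i < m"
    and w: "blk (B i) w = w" "norm w = 1"
  shows "V - blk (B i) V + w \<in> unit_blocks"
  unfolding unit_blocks_def
proof (intro CollectI allI impI)
  fix j
  assume j: "j < m"
  have "blk (B j) w = (if j = i then w else 0)"
    using blk_blk_block[OF j i, of w] w(1) by simp
  then have "blk (B j) (V - blk (B i) V + w) = (if j = i then w else blk (B j) V)"
    using blk_blk_block[OF j i, of V] by (simp add: linear_add linear_diff linear_blk)
  with V j w(2) show "norm (blk (B j) (V - blk (B i) V + w)) = 1"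
    by (simp add: unit_blocks_def)
qed

lemma directional_gradient_bound_unit_blocks:
  fixes f :: "'a \<Rightarrow> real" and gr :: "'a \<Rightarrow> 'a" and H :: "'a \<Rightarrow> 'a \<Rightarrow> 'a"
  assumes i: "i < m"
    and grad: "\<And>x. x \<in> nondegenerate \<Longrightarrow> (f has_derivative (\<lambda>h. gr x \<bullet> h)) (at x)"
    and hess: "\<And>x. x \<in> nondegenerate \<Longrightarrow> (gr has_derivative H x) (at x)"
    and radial: "\<And>x. x \<in> nondegenerate \<Longrightarrow> gr x \<bullet> blk (B i) x = 0"
    and bound: "\<And>x h. x \<in> unit_blocks \<Longrightarrow> blk (B i) h = h \<Longrightarrow> norm h = 1 \<Longrightarrow>
      \<bar>H x h \<bullet> h\<bar> \<le> M"
    and V: "V \<in> unit_blocks"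
    and u: "blk (B i) u = u" "norm u = 1" "blk (B i) V \<bullet> u = 0"
  shows "\<bar>gr V \<bullet> u\<bar> \<le> pi * M"
proof -
  define v where "v = blk (B i) V"
  have v: "blk (B i) v = v" "norm v = 1"
    using V i blocks_Basis by (simp_all add: v_def blk_idem unit_blocks_def)
  have circle: "norm (cos t *\<^sub>R v + sin t *\<^sub>R u) = 1"
    and tangent: "norm (cos t *\<^sub>R u - sin t *\<^sub>R v) = 1" for t
    using norm_cos_sin_orthonormal[of v u t] norm_cos_sin_orthonormal[of u "- v" t] v u
    by (simp_all add: v_def inner_commute)
  have blk_circle: "blk (B i) (cos t *\<^sub>R v + sin t *\<^sub>R u) = cos t *\<^sub>R v + sin t *\<^sub>R u"
    and blk_tangent: "blk (B i) (cos t *\<^sub>R u - sin t *\<^sub>R v) = cos t *\<^sub>R u - sin t *\<^sub>R v" for t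
    using v u by (simp_all add: linear_add linear_diff linear_scale linear_blk)
  have on_circle: "V - v + cos t *\<^sub>R v + sin t *\<^sub>R u \<in> unit_blocks" for t
    using replace_block_unit_blocks[OF V i blk_circle circle] by (simp add: v_def add.assoc)
  have "\<bar>gr (V - v + v) \<bullet> u\<bar> \<le> pi * M"
  proof (rule great_circle_gradient_bound[where f = f and H = H])
    fix t
    let ?x = "V - v + cos t *\<^sub>R v + sin t *\<^sub>R u"
    have x: "?x \<in> nondegenerate"
      using on_circle unit_blocks_subset_nondegenerate by blast
    show "(f has_derivative (\<lambda>h. gr ?x \<bullet> h)) (at ?x)"
      using grad[OF x] .
    show "(gr has_derivative H ?x) (at ?x)"
      using hess[OF x] .
    have "blk (B i) ?x = cos t *\<^sub>R v + sin t *\<^sub>R u"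
      using blk_circle v(1) by (simp add: v_def linear_add linear_diff linear_blk add.assoc)
    then show "gr ?x \<bullet> (?x - (V - v)) = 0"
      using radial[OF x] by (simp add: add.assoc)
    show "\<bar>H ?x (cos t *\<^sub>R u - sin t *\<^sub>R v) \<bullet> (cos t *\<^sub>R u - sin t *\<^sub>R v)\<bar> \<le> M"
      using bound[OF on_circle blk_tangent tangent] .
  qed
  then show ?thesis
    by simp
qed

lemma gradient_bound_unit_blocks:
  fixes f :: "'a \<Rightarrow> real" and gr :: "'a \<Rightarrow> 'a" and H :: "'a \<Rightarrow> 'a \<Rightarrow> 'a"
  assumes i: "i < m"
    and grad: "\<And>x. x \<in> nondegenerate \<Longrightarrow> (f has_derivative (\<lambda>h. gr x \<bullet> h)) (at x)"
    and hess: "\<And>x. x \<in> nondegenerate \<Longrightarrow> (gr has_derivative H x) (at x)"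
    and radial: "\<And>x. x \<in> nondegenerate \<Longrightarrow> gr x \<bullet> blk (B i) x = 0"
    and bound: "\<And>x h. x \<in> unit_blocks \<Longrightarrow> blk (B i) h = h \<Longrightarrow> norm h = 1 \<Longrightarrow>
      \<bar>H x h \<bullet> h\<bar> \<le> M"
    and V: "V \<in> unit_blocks"
  shows "norm (blk (B i) (gr V)) \<le> pi * M"
proof (cases "blk (B i) (gr V) = 0")
  case True
  have "norm (blk (B i) V) = 1" "blk (B i) (blk (B i) V) = blk (B i) V"
    using V i blocks_Basis by (simp_all add: unit_blocks_def blk_idem)
  then have "0 \<le> M"
    using bound[OF V] by (meson abs_ge_zero order_trans)
  with True show ?thesis
    by simp
next
  case False
  define G where "G = blk (B i) (gr V)"
  define u where "u = inverse (norm G) *\<^sub>R G"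
  have Bi: "B i \<subseteq> Basis"
    using blocks_Basis i .
  have "G \<bullet> blk (B i) V = 0"
    using radial[of V] V unit_blocks_subset_nondegenerate Bi
    by (auto simp: G_def inner_blk_commute blk_idem)
  then have u: "blk (B i) u = u" "norm u = 1" "blk (B i) V \<bullet> u = 0"
    using False Bi by (simp_all add: u_def G_def blk_idem linear_scale linear_blk inner_commute)
  have "\<bar>gr V \<bullet> u\<bar> \<le> pi * M"
    using directional_gradient_bound_unit_blocks[OF i grad hess radial bound V u] .
  moreover have "gr V \<bullet> u = G \<bullet> u"
    using u(1) Bi by (metis G_def inner_blk_commute)
  moreover have "G \<bullet> u = norm G"
    using False by (simp add: u_def G_def power2_eq_square flip: power2_norm_eq_inner)
  ultimately show ?thesis
    by (simp add: G_def)
qed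

end

theorem lemmaA1:
  fixes L :: "'a::euclidean_space \<Rightarrow> real"
    and gr :: "'a \<Rightarrow> 'a"
    and H :: "'a \<Rightarrow> 'a \<Rightarrow>\<^sub>L 'a"
    and B :: "nat \<Rightarrow> 'a set"
    and m i :: nat
    and Lvv :: real
  assumes blocks: "\<forall>j<m. B j \<subseteq> Basis"
    and disj: "\<forall>j<m. \<forall>k<m. j \<noteq> k \<longrightarrow> B j \<inter> B k = {}"
    and i: "i < m"
    and grad: "\<forall>x. (\<forall>j<m. blk (B j) x \<noteq> 0) \<longrightarrow>
                  (L has_derivative (\<lambda>h. gr x \<bullet> h)) (at x)"
    and hess: "\<forall>x. (\<forall>j<m. blk (B j) x \<noteq> 0) \<longrightarrow>
                  (gr has_derivative blinfun_apply (H x)) (at x)"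
    and hess_cont: "continuous_on {x. \<forall>j<m. blk (B j) x \<noteq> 0} H"
    and scale: "\<forall>j<m. \<forall>x. \<forall>c::real. (\<forall>k<m. blk (B k) x \<noteq> 0) \<and> c > 0 \<longrightarrow>
                  L (x + (c - 1) *\<^sub>R blk (B j) x) = L x"
    and bound: "\<forall>x. (\<forall>j<m. norm (blk (B j) x) = 1) \<longrightarrow>
                  onorm (\<lambda>h. blk (B i) (H x (blk (B i) h))) \<le> Lvv"
  shows "\<forall>x. (\<forall>j<m. blk (B j) x \<noteq> 0) \<longrightarrow>
           norm (blk (B i) (gr x)) \<le> pi * Lvv / norm (blk (B i) x)"
proof (intro allI impI)
  interpret parameter_blocks B m
    using blocks disj by unfold_locales auto
  have grad': "(L has_derivative (\<lambda>h. gr x \<bullet> h)) (at x)" if "x \<in> nondegenerate" for x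
    using grad that by (simp add: nondegenerate_def)
  have hess': "(gr has_derivative H x) (at x)" if "x \<in> nondegenerate" for x
    using hess that by (simp add: nondegenerate_def)
  have scale': "L (x + (s - 1) *\<^sub>R blk (B j) x) = L x"
    if "j < m" "x \<in> nondegenerate" "s > 0" for j x s
    using scale that by (simp add: nondegenerate_def)
  have radial: "gr x \<bullet> blk (B i) x = 0" if "x \<in> nondegenerate" for x
    using gradient_orthogonal_if_scale_invariant[OF grad'[OF that]] scale'[OF i that] by blast
  have bound': "\<bar>H x h \<bullet> h\<bar> \<le> Lvv" if "x \<in> unit_blocks" "blk (B i) h = h" "norm h = 1" for x h
    using order_trans[OF abs_inner_le_onorm_compression[OF blocks_Basis[OF i]
        blinfun.bounded_linear_right[of "H x"] that(2,3)]] bound that(1)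
    by (simp add: unit_blocks_def)
  fix x
  assume "\<forall>j<m. blk (B j) x \<noteq> 0"
  then have x: "x \<in> nondegenerate"
    by (simp add: nondegenerate_def)
  define c where "c j = 1 / norm (blk (B j) x)" for j
  have c_pos: "c j > 0" if "j < m" for j
    using x that by (simp add: c_def nondegenerate_def)
  have "rescale c m x \<in> unit_blocks"
    using x by (simp add: unit_blocks_def blk_rescale c_def nondegenerate_def)
  then have "norm (blk (B i) (gr (rescale c m x))) \<le> pi * Lvv"
    using gradient_bound_unit_blocks[OF i grad' hess' radial bound'] by blast
  moreover have "blk (B i) (gr x) = c i *\<^sub>R blk (B i) (gr (rescale c m x))"
    by (rule blk_gradient_rescale[OF scale' grad' c_pos x i])
  ultimately show "norm (blk (B i) (gr x)) \<le> pi * Lvv / norm (blk (B i) x)"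
    using c_pos[OF i] by (simp add: c_def divide_right_mono)
qed

end
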